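(* Let $(G,\preceq)$ be a cc sponge group with positive cone $C=\{x\in G\mid\mathbf{1}\preceq x\}$, and let $H$ be a subgroup of $G$ such that (i) for all $q,r\in G$, if $\mathbf{1}\preceq q$, $\mathbf{1}\preceq r$ and $q\cdot r\in H$, then $q\in H$ and $r\in H$; and (ii) for every $z\in G$ there is $h\in H$ with $R(z)\cap C\cdot H\subseteq R(h)$, where $R(z)=\{y\in G\mid z\preceq y\}$. Define the relation $\sqsubseteq$ on $G/H=\{x\cdot H\mid x\in G\}$ by $\overline{x}\sqsubseteq\overline{y}\iff x^{-1}\cdot y\in C\cdot H$ (where $\overline{x}=x\cdot H$). Then $(G/H,\sqsubseteq)$ is a cc sponge. If $H$ is a normal subgroup of $G$, then $(G/H,\sqsubseteq)$ is a cc sponge group.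
   Context: An orientation is a reflexive, antisymmetric binary relation. An oriented group is a group $G$ (operation $\cdot$, neutral element $\mathbf{1}$) with an orientation $\preceq$ such that $x\preceq y$ implies $x\cdot z\preceq y\cdot z$ and $z\cdot x\preceq z\cdot y$. A subset $P$ is right-bounded if some $s$ has $p\preceq s$ for all $p\in P$; the join of $P$ is an $x$ with $p\preceq x$ for all $p\in P$ and $x\preceq y$ whenever $p\preceq y$ for all $p\in P$. An oriented set is a cc sponge if every nonempty right-bounded subset has a join (equivalently for these structures, every nonempty left-bounded subset has a meet). A cc sponge group is an oriented group that is a cc sponge. *)

theory Defs
  imports "HOL-Algebra.Left_Coset"
begin

definition orientation :: "'a set \<Rightarrow> ('a \<Rightarrow> 'a \<Rightarrow> bool) \<Rightarrow> bool" where
  "orientation A rel \<longleftrightarrow> (\<forall>x\<in>A. rel x x) \<and> (\<forall>x\<in>A. \<forall>y\<in>A. rel x y \<and> rel y x \<longrightarrow> x = y)"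

definition oriented_group :: "('a, 'b) monoid_scheme \<Rightarrow> ('a \<Rightarrow> 'a \<Rightarrow> bool) \<Rightarrow> bool" where
  "oriented_group G rel \<longleftrightarrow> group G \<and> orientation (carrier G) rel \<and>
     (\<forall>x\<in>carrier G. \<forall>y\<in>carrier G. \<forall>z\<in>carrier G. rel x y \<longrightarrow>
        rel (x \<otimes>\<^bsub>G\<^esub> z) (y \<otimes>\<^bsub>G\<^esub> z) \<and> rel (z \<otimes>\<^bsub>G\<^esub> x) (z \<otimes>\<^bsub>G\<^esub> y))"

definition right_bounded :: "'a set \<Rightarrow> ('a \<Rightarrow> 'a \<Rightarrow> bool) \<Rightarrow> 'a set \<Rightarrow> bool" where
  "right_bounded A rel P \<longleftrightarrow> (\<exists>s\<in>A. \<forall>p\<in>P. rel p s)"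

definition is_join :: "'a set \<Rightarrow> ('a \<Rightarrow> 'a \<Rightarrow> bool) \<Rightarrow> 'a set \<Rightarrow> 'a \<Rightarrow> bool" where
  "is_join A rel P x \<longleftrightarrow> x \<in> A \<and> (\<forall>p\<in>P. rel p x) \<and>
     (\<forall>y\<in>A. (\<forall>p\<in>P. rel p y) \<longrightarrow> rel x y)"

definition cc_sponge :: "'a set \<Rightarrow> ('a \<Rightarrow> 'a \<Rightarrow> bool) \<Rightarrow> bool" where
  "cc_sponge A rel \<longleftrightarrow> orientation A rel \<and>
     (\<forall>P. P \<subseteq> A \<and> P \<noteq> {} \<and> right_bounded A rel P \<longrightarrow> (\<exists>x. is_join A rel P x))"

definition cc_sponge_group :: "('a, 'b) monoid_scheme \<Rightarrow> ('a \<Rightarrow> 'a \<Rightarrow> bool) \<Rightarrow> bool" where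
  "cc_sponge_group G rel \<longleftrightarrow> oriented_group G rel \<and> cc_sponge (carrier G) rel"

definition pos_cone :: "('a, 'b) monoid_scheme \<Rightarrow> ('a \<Rightarrow> 'a \<Rightarrow> bool) \<Rightarrow> 'a set" where
  "pos_cone G rel = {x \<in> carrier G. rel \<one>\<^bsub>G\<^esub> x}"

definition right_set :: "('a, 'b) monoid_scheme \<Rightarrow> ('a \<Rightarrow> 'a \<Rightarrow> bool) \<Rightarrow> 'a \<Rightarrow> 'a set" where
  "right_set G rel z = {y \<in> carrier G. rel z y}"

definition quot_rel :: "('a, 'b) monoid_scheme \<Rightarrow> ('a \<Rightarrow> 'a \<Rightarrow> bool) \<Rightarrow> 'a set \<Rightarrow> 'a set \<Rightarrow> 'a set \<Rightarrow> bool" where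
  "quot_rel G rel H X Y \<longleftrightarrow> (\<exists>x\<in>carrier G. \<exists>y\<in>carrier G.
      X = x <#\<^bsub>G\<^esub> H \<and> Y = y <#\<^bsub>G\<^esub> H \<and>
      inv\<^bsub>G\<^esub> x \<otimes>\<^bsub>G\<^esub> y \<in> pos_cone G rel <#>\<^bsub>G\<^esub> H)"

end

(* Write C for the positive cone. For cosets xH and yH one has xH below yH iff some element of
   xH lies below some element of yH, equivalently iff x \<preceq> y h for some h in H; this makes the
   relation well defined, reflexive and, for normal H, compatible with coset multiplication.
   Antisymmetry is convexity (i): if x^-1 y and y^-1 x both lie in C H, then x^-1 y h and a
   conjugate of y^-1 x h' are positive with product in H, hence x^-1 y is in H.
   For a family P of cosets bounded by sH, the elements of the union of P lying below s form a
   bounded subset Q of G, whose join j gives the join jH of P. Minimality of jH uses (ii): for an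
   upper bound tH, one h in H with R(s^-1 t) \<inter> C H \<subseteq> R(h) gives q \<preceq> t h^-1 for all q in Q
   at once, hence j \<preceq> t h^-1. *)

theory Submission
  imports Defs
begin

lemma (in normal) lcosets_eq_rcosets: "lcosets H = rcosets H"
  unfolding LCOSETS_def RCOSETS_def using coset_eq by auto

lemma (in normal) LFactGroup_eq_FactGroup: "G LMod H = G Mod H"
  unfolding LFactGroup_def FactGroup_def lcosets_eq_rcosets ..

lemma (in group) mult_inv_cancel: "\<lbrakk>x \<in> carrier G; y \<in> carrier G\<rbrakk> \<Longrightarrow> x \<otimes> (inv x \<otimes> y) = y"
  by (simp add: m_assoc [symmetric])

lemma lcosetsI: "x \<in> carrier G \<Longrightarrow> x <#\<^bsub>G\<^esub> H \<in> lcosets\<^bsub>G\<^esub> H"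
  unfolding LCOSETS_def by blast

lemma lcosetsE:
  assumes "X \<in> lcosets\<^bsub>G\<^esub> H"
  obtains x where "x \<in> carrier G" "X = x <#\<^bsub>G\<^esub> H"
  using assms unfolding LCOSETS_def by blast

locale biinvariant_group = group G for G (structure) +
  fixes rel :: "'a \<Rightarrow> 'a \<Rightarrow> bool" (infix "\<preceq>" 50)
  assumes le_refl: "x \<in> carrier G \<Longrightarrow> x \<preceq> x"
    and le_mult_right:
      "\<lbrakk>x \<preceq> y; x \<in> carrier G; y \<in> carrier G; z \<in> carrier G\<rbrakk> \<Longrightarrow> x \<otimes> z \<preceq> y \<otimes> z"
    and le_mult_left:
      "\<lbrakk>x \<preceq> y; x \<in> carrier G; y \<in> carrier G; z \<in> carrier G\<rbrakk> \<Longrightarrow> z \<otimes> x \<preceq> z \<otimes> y"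

lemma biinvariant_groupI: "oriented_group G rel \<Longrightarrow> biinvariant_group G rel"
  by (simp add: oriented_group_def orientation_def biinvariant_group_def
      biinvariant_group_axioms_def)

context biinvariant_group
begin

lemma le_mult_left_iff:
  assumes "x \<in> carrier G" "y \<in> carrier G" "z \<in> carrier G"
  shows "z \<otimes> x \<preceq> z \<otimes> y \<longleftrightarrow> x \<preceq> y"
proof
  assume "z \<otimes> x \<preceq> z \<otimes> y"
  then have "inv z \<otimes> (z \<otimes> x) \<preceq> inv z \<otimes> (z \<otimes> y)"
    by (rule le_mult_left) (use assms in auto)
  then show "x \<preceq> y"
    using assms by (simp add: m_assoc [symmetric])
qed (use assms le_mult_left in blast)

lemma le_mult_right_iff:
  assumes "x \<in> carrier G" "y \<in> carrier G" "z \<in> carrier G"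
  shows "x \<otimes> z \<preceq> y \<otimes> z \<longleftrightarrow> x \<preceq> y"
proof
  assume "x \<otimes> z \<preceq> y \<otimes> z"
  then have "x \<otimes> z \<otimes> inv z \<preceq> y \<otimes> z \<otimes> inv z"
    by (rule le_mult_right) (use assms in auto)
  then show "x \<preceq> y"
    using assms by (simp add: m_assoc)
qed (use assms le_mult_right in blast)

lemma le_iff_one_le_inv_mult:
  assumes "x \<in> carrier G" "y \<in> carrier G"
  shows "x \<preceq> y \<longleftrightarrow> \<one> \<preceq> inv x \<otimes> y"
  using le_mult_left_iff [of x y "inv x"] assms by simp

lemma inv_le_inv:
  assumes "x \<in> carrier G" "y \<in> carrier G" "x \<preceq> y"
  shows "inv y \<preceq> inv x"
proof -
  have "inv y \<otimes> x \<preceq> inv y \<otimes> y"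
    using assms(3) by (rule le_mult_left) (use assms in auto)
  then have "inv y \<otimes> x \<otimes> inv x \<preceq> inv y \<otimes> y \<otimes> inv x"
    by (rule le_mult_right) (use assms in auto)
  then show ?thesis
    using assms by (simp add: m_assoc)
qed

lemma one_le_conj:
  assumes "c \<in> carrier G" "g \<in> carrier G" "\<one> \<preceq> c"
  shows "\<one> \<preceq> inv g \<otimes> c \<otimes> g"
proof -
  have "g \<preceq> c \<otimes> g"
    using le_mult_right [OF assms(3), of g] assms by simp
  then have "inv g \<otimes> g \<preceq> inv g \<otimes> (c \<otimes> g)"
    by (rule le_mult_left) (use assms in auto)
  then show ?thesis
    using assms by (simp add: m_assoc)
qed

end

locale biinvariant_group_subgroup = biinvariant_group +
  fixes H :: "'a set"
  assumes H_subgroup: "subgroup H G"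
begin

abbreviation cone :: "'a set"
  where "cone \<equiv> pos_cone G (\<preceq>)"

abbreviation quot_le :: "'a set \<Rightarrow> 'a set \<Rightarrow> bool" (infix "\<sqsubseteq>\<^sub>H" 50)
  where "X \<sqsubseteq>\<^sub>H Y \<equiv> quot_rel G (\<preceq>) H X Y"

sublocale H: subgroup H G
  by (fact H_subgroup)

lemma mem_cone_mult_iff:
  assumes "g \<in> carrier G"
  shows "g \<in> cone <#> H \<longleftrightarrow> (\<exists>h\<in>H. \<one> \<preceq> g \<otimes> h)"
proof
  assume "g \<in> cone <#> H"
  then obtain c h where "c \<in> carrier G" "\<one> \<preceq> c" "h \<in> H" "g = c \<otimes> h"
    unfolding set_mult_def pos_cone_def by auto
  moreover have "c \<otimes> h \<otimes> inv h = c"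
    using \<open>c \<in> carrier G\<close> \<open>h \<in> H\<close> by (simp add: m_assoc)
  ultimately show "\<exists>h\<in>H. \<one> \<preceq> g \<otimes> h"
    using H.m_inv_closed by metis
next
  assume "\<exists>h\<in>H. \<one> \<preceq> g \<otimes> h"
  then obtain h where h: "h \<in> H" "\<one> \<preceq> g \<otimes> h" by blast
  then have "g \<otimes> h \<in> cone" and "inv h \<in> H"
    using assms by (auto simp: pos_cone_def)
  moreover have "g = g \<otimes> h \<otimes> inv h"
    using assms h(1) by (simp add: m_assoc)
  ultimately show "g \<in> cone <#> H"
    unfolding set_mult_def by blast
qed

lemma inv_mult_mem_cone_mult_iff:
  assumes "x \<in> carrier G" "y \<in> carrier G"
  shows "inv x \<otimes> y \<in> cone <#> H \<longleftrightarrow> (\<exists>h\<in>H. x \<preceq> y \<otimes> h)"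
proof -
  have "\<one> \<preceq> inv x \<otimes> y \<otimes> h \<longleftrightarrow> x \<preceq> y \<otimes> h" if "h \<in> H" for h
    using assms that le_iff_one_le_inv_mult [of x "y \<otimes> h"] by (simp add: m_assoc)
  then show ?thesis
    using assms by (simp add: mem_cone_mult_iff)
qed

lemma ex_le_lcos_iff:
  assumes "x \<in> carrier G" "y \<in> carrier G"
  shows "(\<exists>x'\<in>x <# H. \<exists>y'\<in>y <# H. x' \<preceq> y') \<longleftrightarrow> (\<exists>h\<in>H. x \<preceq> y \<otimes> h)"
proof
  assume "\<exists>x'\<in>x <# H. \<exists>y'\<in>y <# H. x' \<preceq> y'"
  then obtain h1 h2 where h: "h1 \<in> H" "h2 \<in> H" "x \<otimes> h1 \<preceq> y \<otimes> h2"
    unfolding l_coset_def by blast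
  have "x \<otimes> h1 \<otimes> inv h1 \<preceq> y \<otimes> h2 \<otimes> inv h1"
    using h(3) by (rule le_mult_right) (use assms h in auto)
  then have "x \<preceq> y \<otimes> (h2 \<otimes> inv h1)"
    using assms h by (simp add: m_assoc)
  then show "\<exists>h\<in>H. x \<preceq> y \<otimes> h"
    using h by blast
next
  assume "\<exists>h\<in>H. x \<preceq> y \<otimes> h"
  then show "\<exists>x'\<in>x <# H. \<exists>y'\<in>y <# H. x' \<preceq> y'"
    using lcos_self [OF assms(1) H_subgroup] unfolding l_coset_def by blast
qed

lemma quot_le_lcos_iff:
  assumes "x \<in> carrier G" "y \<in> carrier G"
  shows "x <# H \<sqsubseteq>\<^sub>H y <# H \<longleftrightarrow> inv x \<otimes> y \<in> cone <#> H"
proof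
  assume "x <# H \<sqsubseteq>\<^sub>H y <# H"
  then obtain x' y' where "x' \<in> carrier G" "y' \<in> carrier G"
    and "x <# H = x' <# H" "y <# H = y' <# H" "inv x' \<otimes> y' \<in> cone <#> H"
    unfolding quot_rel_def by blast
  then have "\<exists>h\<in>H. x' \<preceq> y' \<otimes> h"
    by (simp add: inv_mult_mem_cone_mult_iff)
  then have "\<exists>h\<in>H. x \<preceq> y \<otimes> h"
    using ex_le_lcos_iff [OF assms] ex_le_lcos_iff [OF \<open>x' \<in> carrier G\<close> \<open>y' \<in> carrier G\<close>]
      \<open>x <# H = x' <# H\<close> \<open>y <# H = y' <# H\<close> by simp
  then show "inv x \<otimes> y \<in> cone <#> H"
    using assms by (simp add: inv_mult_mem_cone_mult_iff)
qed (use assms in \<open>auto simp: quot_rel_def\<close>)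

lemma lcosets_eq_lcos:
  assumes "X \<in> lcosets H" "x \<in> X"
  shows "x \<in> carrier G" "X = x <# H"
proof -
  obtain y where "y \<in> carrier G" "X = y <# H"
    using assms(1) by (rule lcosetsE)
  then show "x \<in> carrier G" "X = x <# H"
    using assms(2) l_coset_carrier l_repr_independence H_subgroup by blast+
qed

lemma quot_le_iff_ex_le:
  assumes "X \<in> lcosets H" "Y \<in> lcosets H"
  shows "X \<sqsubseteq>\<^sub>H Y \<longleftrightarrow> (\<exists>x\<in>X. \<exists>y\<in>Y. x \<preceq> y)"
proof -
  obtain x y where "x \<in> carrier G" "X = x <# H" "y \<in> carrier G" "Y = y <# H"
    using lcosetsE [OF assms(1)] lcosetsE [OF assms(2)] by metis
  then show ?thesis
    by (simp add: quot_le_lcos_iff inv_mult_mem_cone_mult_iff ex_le_lcos_iff)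
qed

lemma quot_le_refl:
  assumes "X \<in> lcosets H"
  shows "X \<sqsubseteq>\<^sub>H X"
proof -
  obtain x where "x \<in> carrier G" "X = x <# H"
    using assms by (rule lcosetsE)
  then have "x \<in> X" "x \<preceq> x"
    using lcos_self H_subgroup le_refl by auto
  then show ?thesis
    using quot_le_iff_ex_le [OF assms assms] by blast
qed

lemma ex_mem_le_if_quot_le:
  assumes "X \<in> lcosets H" "s \<in> carrier G" "X \<sqsubseteq>\<^sub>H s <# H"
  shows "\<exists>x\<in>X. x \<preceq> s"
proof -
  obtain x where x: "x \<in> carrier G" "X = x <# H"
    using assms(1) by (rule lcosetsE)
  then obtain h where h: "h \<in> H" "h \<in> carrier G" "x \<preceq> s \<otimes> h"
    using assms by (auto simp: quot_le_lcos_iff inv_mult_mem_cone_mult_iff)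
  have "x \<otimes> inv h \<preceq> s \<otimes> h \<otimes> inv h"
    using h(3) by (rule le_mult_right) (use x assms h in auto)
  then have "x \<otimes> inv h \<preceq> s"
    using assms h by (simp add: m_assoc)
  moreover have "x \<otimes> inv h \<in> X"
    using x h unfolding l_coset_def by blast
  ultimately show ?thesis ..
qed

lemma quot_le_mult_compat:
  assumes "H \<lhd> G" "X \<in> lcosets H" "Y \<in> lcosets H" "Z \<in> lcosets H" "X \<sqsubseteq>\<^sub>H Y"
  shows "X <#> Z \<sqsubseteq>\<^sub>H Y <#> Z" "Z <#> X \<sqsubseteq>\<^sub>H Z <#> Y"
proof -
  have closed: "A <#> B \<in> lcosets H" if "A \<in> lcosets H" "B \<in> lcosets H" for A B
    using normal.setmult_closed [OF assms(1)] normal.lcosets_eq_rcosets [OF assms(1)] that by simp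
  obtain x y where xy: "x \<in> X" "y \<in> Y" "x \<preceq> y"
    using assms(2,3,5) quot_le_iff_ex_le by blast
  obtain z where z: "z \<in> carrier G" "Z = z <# H"
    using assms(4) by (rule lcosetsE)
  have carr: "x \<in> carrier G" "y \<in> carrier G"
    using xy assms(2,3) lcosets_eq_lcos(1) by blast+
  have "z \<in> Z"
    using lcos_self [OF z(1) H_subgroup] z(2) by simp
  moreover have "x \<otimes> z \<preceq> y \<otimes> z" "z \<otimes> x \<preceq> z \<otimes> y"
    using xy(3) carr z(1) by (simp_all add: le_mult_right le_mult_left)
  ultimately show "X <#> Z \<sqsubseteq>\<^sub>H Y <#> Z" "Z <#> X \<sqsubseteq>\<^sub>H Z <#> Y"
    using quot_le_iff_ex_le closed assms(2-4) xy(1,2) unfolding set_mult_def by blast+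
qed

end

locale convex_subgroup = biinvariant_group_subgroup +
  assumes convex: "\<lbrakk>q \<in> carrier G; r \<in> carrier G; \<one> \<preceq> q; \<one> \<preceq> r; q \<otimes> r \<in> H\<rbrakk>
    \<Longrightarrow> q \<in> H \<and> r \<in> H"
begin

lemma mem_subgroup_if_cone_mult:
  assumes g: "g \<in> carrier G" "g \<in> cone <#> H" "inv g \<in> cone <#> H"
  shows "g \<in> H"
proof -
  obtain h h' where h: "h \<in> H" "\<one> \<preceq> g \<otimes> h" and h': "h' \<in> H" "\<one> \<preceq> inv g \<otimes> h'"
    using g mem_cone_mult_iff by auto
  have hc: "h \<in> carrier G" "h' \<in> carrier G"
    using h h' by simp_all
  define r where "r = inv h \<otimes> (inv g \<otimes> h') \<otimes> h"
  have r: "r \<in> carrier G" "\<one> \<preceq> r"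
    unfolding r_def using one_le_conj h' hc g by simp_all
  have "g \<otimes> h \<otimes> r = h' \<otimes> h"
    unfolding r_def using g hc by (simp add: m_assoc mult_inv_cancel)
  then have "g \<otimes> h \<otimes> r \<in> H"
    using h h' by simp
  then have "g \<otimes> h \<in> H"
    using convex [OF _ r(1) h(2) r(2)] g hc by blast
  then have "g \<otimes> h \<otimes> inv h \<in> H"
    using h by simp
  then show "g \<in> H"
    using g hc by (simp add: m_assoc)
qed

lemma quot_le_antisym:
  assumes "X \<in> lcosets H" "Y \<in> lcosets H" "X \<sqsubseteq>\<^sub>H Y" "Y \<sqsubseteq>\<^sub>H X"
  shows "X = Y"
proof -
  obtain x y where xy: "x \<in> carrier G" "X = x <# H" "y \<in> carrier G" "Y = y <# H"
    using lcosetsE [OF assms(1)] lcosetsE [OF assms(2)] by metis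
  have "inv x \<otimes> y \<in> cone <#> H" "inv (inv x \<otimes> y) \<in> cone <#> H"
    using assms(3,4) xy by (simp_all add: quot_le_lcos_iff inv_mult_group)
  then have "inv x \<otimes> y \<in> H"
    using mem_subgroup_if_cone_mult xy by simp
  then have "y \<in> x <# H"
    using H.lcos_module_rev [OF is_group] xy by blast
  then show "X = Y"
    using l_repr_independence H_subgroup xy by blast
qed

end

locale cone_bounded_subgroup = biinvariant_group_subgroup +
  assumes bound: "z \<in> carrier G \<Longrightarrow>
    \<exists>h\<in>H. right_set G (\<preceq>) z \<inter> (cone <#> H) \<subseteq> right_set G (\<preceq>) h"
begin

lemma ex_uniform_shift:
  assumes "s \<in> carrier G" "t \<in> carrier G"
  shows "\<exists>h\<in>H. \<forall>q\<in>carrier G. q \<preceq> s \<and> q <# H \<sqsubseteq>\<^sub>H t <# H \<longrightarrow> q \<preceq> t \<otimes> inv h"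
proof -
  obtain h where h: "h \<in> H"
    and bound_h: "right_set G (\<preceq>) (inv s \<otimes> t) \<inter> (cone <#> H) \<subseteq> right_set G (\<preceq>) h"
    using bound assms by blast
  have "q \<preceq> t \<otimes> inv h" if q: "q \<in> carrier G" "q \<preceq> s" "q <# H \<sqsubseteq>\<^sub>H t <# H" for q
  proof -
    have "inv s \<otimes> t \<preceq> inv q \<otimes> t"
      using inv_le_inv [OF q(1) assms(1) q(2)] by (rule le_mult_right) (use q assms in auto)
    moreover have "inv q \<otimes> t \<in> cone <#> H"
      using q assms by (simp add: quot_le_lcos_iff)
    ultimately have "inv q \<otimes> t \<in> right_set G (\<preceq>) (inv s \<otimes> t) \<inter> (cone <#> H)"
      using q assms by (simp add: right_set_def)
    then have "h \<preceq> inv q \<otimes> t"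
      using bound_h unfolding right_set_def by blast
    then have "q \<otimes> h \<preceq> t"
      using le_mult_left_iff [of h "inv q \<otimes> t" q] q assms h by (simp add: mult_inv_cancel)
    then show ?thesis
      using le_mult_right_iff [of q "t \<otimes> inv h" h] q assms h by (simp add: m_assoc)
  qed
  then show ?thesis
    using h by blast
qed

lemma is_join_lcos_if_is_join:
  assumes P: "P \<subseteq> lcosets H" "\<forall>X\<in>P. X \<sqsubseteq>\<^sub>H s <# H" and s: "s \<in> carrier G"
    and j: "is_join (carrier G) (\<preceq>) {q \<in> \<Union>P. q \<preceq> s} j"
  shows "is_join (lcosets H) (\<sqsubseteq>\<^sub>H) P (j <# H)"
  unfolding is_join_def
proof (intro conjI ballI impI)
  have j_carrier: "j \<in> carrier G"
    using j unfolding is_join_def by blast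
  then show J: "j <# H \<in> lcosets H"
    by (rule lcosetsI)
  have "j \<in> j <# H"
    using lcos_self [OF j_carrier H.subgroup_axioms] .
  then show "X \<sqsubseteq>\<^sub>H j <# H" if X: "X \<in> P" for X
  proof -
    have "X \<in> lcosets H"
      using P(1) X by blast
    moreover obtain x where "x \<in> X" "x \<preceq> s"
      using ex_mem_le_if_quot_le [OF calculation s] P(2) X by blast
    moreover have "x \<preceq> j"
      using j \<open>x \<in> X\<close> \<open>x \<preceq> s\<close> X unfolding is_join_def by blast
    ultimately show ?thesis
      using quot_le_iff_ex_le [OF _ J] \<open>j \<in> j <# H\<close> by blast
  qed
  fix Y assume Y: "Y \<in> lcosets H" and upper: "\<forall>X\<in>P. X \<sqsubseteq>\<^sub>H Y"
  obtain t where t: "t \<in> carrier G" "Y = t <# H"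
    using Y by (rule lcosetsE)
  obtain h where h: "h \<in> H"
    and shift: "\<forall>q\<in>carrier G. q \<preceq> s \<and> q <# H \<sqsubseteq>\<^sub>H t <# H \<longrightarrow> q \<preceq> t \<otimes> inv h"
    using ex_uniform_shift [OF s t(1)] by blast
  have "q \<preceq> t \<otimes> inv h" if q: "q \<in> \<Union>P" "q \<preceq> s" for q
  proof -
    obtain X where X: "X \<in> P" "q \<in> X"
      using q(1) by blast
    then have "q \<in> carrier G" "X = q <# H"
      using lcosets_eq_lcos P(1) by blast+
    moreover have "X \<sqsubseteq>\<^sub>H t <# H"
      using upper X(1) t(2) by blast
    ultimately show ?thesis
      using shift q(2) by simp
  qed
  moreover have "t \<otimes> inv h \<in> carrier G"
    using t(1) h by simp
  ultimately have "j \<preceq> t \<otimes> inv h"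
    using j unfolding is_join_def by blast
  moreover have "t \<otimes> inv h \<in> Y"
    using t h unfolding l_coset_def by blast
  ultimately show "j <# H \<sqsubseteq>\<^sub>H Y"
    using quot_le_iff_ex_le J Y \<open>j \<in> j <# H\<close> by blast
qed

lemma quot_le_join:
  assumes sponge: "cc_sponge (carrier G) (\<preceq>)"
    and P: "P \<subseteq> lcosets H" "P \<noteq> {}" "right_bounded (lcosets H) (\<sqsubseteq>\<^sub>H) P"
  shows "\<exists>J. is_join (lcosets H) (\<sqsubseteq>\<^sub>H) P J"
proof -
  obtain S where S: "S \<in> lcosets H" "\<forall>X\<in>P. X \<sqsubseteq>\<^sub>H S"
    using P(3) unfolding right_bounded_def by blast
  obtain s where s: "s \<in> carrier G" "S = s <# H"
    using S(1) by (rule lcosetsE)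
  define Q where "Q = {q \<in> \<Union>P. q \<preceq> s}"
  obtain X where X: "X \<in> P"
    using P(2) by blast
  then obtain x where "x \<in> X" "x \<preceq> s"
    using ex_mem_le_if_quot_le P(1) S(2) s by blast
  then have "Q \<noteq> {}"
    unfolding Q_def using X by blast
  moreover have "Q \<subseteq> carrier G"
    unfolding Q_def using P(1) lcosets_eq_lcos(1) by blast
  moreover have "right_bounded (carrier G) (\<preceq>) Q"
    using s(1) unfolding right_bounded_def Q_def by blast
  ultimately obtain j where "is_join (carrier G) (\<preceq>) Q j"
    using sponge unfolding cc_sponge_def by blast
  then have "is_join (lcosets H) (\<sqsubseteq>\<^sub>H) P (j <# H)"
    using is_join_lcos_if_is_join [OF P(1) _ s(1)] S(2) s(2) unfolding Q_def by simp
  then show ?thesis ..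
qed

end

locale sponge_quotient = convex_subgroup + cone_bounded_subgroup
begin

lemma cc_sponge_lcosets:
  assumes "cc_sponge (carrier G) (\<preceq>)"
  shows "cc_sponge (lcosets H) (\<sqsubseteq>\<^sub>H)"
  unfolding cc_sponge_def orientation_def
proof (intro conjI ballI allI impI)
  show "X \<sqsubseteq>\<^sub>H X" if "X \<in> lcosets H" for X
    using that by (rule quot_le_refl)
  show "X = Y" if "X \<in> lcosets H" "Y \<in> lcosets H" "X \<sqsubseteq>\<^sub>H Y \<and> Y \<sqsubseteq>\<^sub>H X" for X Y
    using that quot_le_antisym by blast
  show "\<exists>J. is_join (lcosets H) (\<sqsubseteq>\<^sub>H) P J"
    if "P \<subseteq> lcosets H \<and> P \<noteq> {} \<and> right_bounded (lcosets H) (\<sqsubseteq>\<^sub>H) P" for P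
    using that quot_le_join [OF assms] by blast
qed

lemma cc_sponge_group_LMod:
  assumes "cc_sponge (carrier G) (\<preceq>)" "H \<lhd> G"
  shows "cc_sponge_group (G LMod H) (\<sqsubseteq>\<^sub>H)"
proof -
  have "group (G LMod H)"
    using normal.factorgroup_is_group normal.LFactGroup_eq_FactGroup assms(2) by metis
  moreover have "cc_sponge (lcosets H) (\<sqsubseteq>\<^sub>H)"
    using assms(1) by (rule cc_sponge_lcosets)
  moreover have "X <#> Z \<sqsubseteq>\<^sub>H Y <#> Z \<and> Z <#> X \<sqsubseteq>\<^sub>H Z <#> Y"
    if "X \<in> lcosets H" "Y \<in> lcosets H" "Z \<in> lcosets H" "X \<sqsubseteq>\<^sub>H Y" for X Y Z
    using quot_le_mult_compat [OF assms(2) that] by blast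
  ultimately show ?thesis
    unfolding cc_sponge_group_def oriented_group_def cc_sponge_def
    by (simp add: LFactGroup_def)
qed

end

theorem mainTheorem12:
  fixes G :: "('a, 'b) monoid_scheme" and rel :: "'a \<Rightarrow> 'a \<Rightarrow> bool" and H :: "'a set"
  assumes sponge: "cc_sponge_group G rel"
    and sub: "subgroup H G"
    and convex: "\<And>q r. q \<in> carrier G \<Longrightarrow> r \<in> carrier G \<Longrightarrow> rel \<one>\<^bsub>G\<^esub> q \<Longrightarrow> rel \<one>\<^bsub>G\<^esub> r \<Longrightarrow>
                   q \<otimes>\<^bsub>G\<^esub> r \<in> H \<Longrightarrow> q \<in> H \<and> r \<in> H"
    and bound: "\<And>z. z \<in> carrier G \<Longrightarrow>
                   \<exists>h\<in>H. right_set G rel z \<inter> (pos_cone G rel <#>\<^bsub>G\<^esub> H) \<subseteq> right_set G rel h"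
  shows "cc_sponge (lcosets\<^bsub>G\<^esub> H) (quot_rel G rel H)
         \<and> (H \<lhd> G \<longrightarrow> cc_sponge_group (G LMod H) (quot_rel G rel H))"
proof -
  have oriented: "oriented_group G rel" and sponge_G: "cc_sponge (carrier G) rel"
    using sponge by (simp_all add: cc_sponge_group_def)
  have "biinvariant_group_subgroup G rel H"
    by (rule biinvariant_group_subgroup.intro [OF biinvariant_groupI [OF oriented]])
      (rule biinvariant_group_subgroup_axioms.intro [OF sub])
  then interpret sponge_quotient G rel H
    by (intro sponge_quotient.intro convex_subgroup.intro cone_bounded_subgroup.intro
        convex_subgroup_axioms.intro cone_bounded_subgroup_axioms.intro convex bound)
  show ?thesis
    by (simp add: cc_sponge_lcosets [OF sponge_G] cc_sponge_group_LMod [OF sponge_G])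
qed

end
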